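(* Let $W\in C^1(\mathbb{R})$ satisfy (W-i) there is $\eta>0$ with $W(s)\geq\eta s^2$ for $|s|\leq1$ and $W(s)\geq\eta$ for $|s|\geq1$; (W-ii) $W''(0)=1$; (W-iii) there are $M>0$, $\alpha\in[0,2)$ with $W(s)\leq M|s|^\alpha$ for $s\geq0$. Let $\mathbf{u}_n$ be a sequence in $X$ with $E(\mathbf{u}_n)\to0$. Then, up to a subsequence, $\|\mathbf{u}_n\|\to0$.
   Context: $X=H^2(\mathbb{R})\times L^2(\mathbb{R})$ with elements $\mathbf{u}=(u,v)$ and norm $\|\mathbf{u}\|^2=\int(v^2+u_{xx}^2+u^2)\,dx$; $E(\mathbf{u})=\frac12\int(v^2+u_{xx}^2)\,dx+\int W(u)\,dx$. *)

theory Defs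
  imports "HOL-Analysis.Analysis"
begin

definition test_fun :: "(real \<Rightarrow> real) \<Rightarrow> bool" where
  "test_fun \<phi> \<longleftrightarrow>
     (\<exists>D :: nat \<Rightarrow> real \<Rightarrow> real. D 0 = \<phi> \<and>
        (\<forall>k x. (D k has_real_derivative D (Suc k) x) (at x))) \<and>
     (\<exists>R. \<forall>x. \<bar>x\<bar> > R \<longrightarrow> \<phi> x = 0)"

definition L2 :: "(real \<Rightarrow> real) \<Rightarrow> bool" where
  "L2 f \<longleftrightarrow> f \<in> borel_measurable lborel \<and> integrable lborel (\<lambda>x. (f x)\<^sup>2)"

definition weak_deriv :: "(real \<Rightarrow> real) \<Rightarrow> (real \<Rightarrow> real) \<Rightarrow> bool" where
  "weak_deriv u g \<longleftrightarrow>
     (\<forall>\<phi>. test_fun \<phi> \<longrightarrow>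
        (LINT x|lborel. u x * deriv \<phi> x) = - (LINT x|lborel. g x * \<phi> x))"

definition H2_with :: "(real \<Rightarrow> real) \<Rightarrow> (real \<Rightarrow> real) \<Rightarrow> bool" where
  "H2_with u uxx \<longleftrightarrow> L2 u \<and> L2 uxx \<and>
     (\<exists>ux. L2 ux \<and> weak_deriv u ux \<and> weak_deriv ux uxx)"

definition energy :: "(real \<Rightarrow> real) \<Rightarrow> (real \<Rightarrow> real) \<Rightarrow> (real \<Rightarrow> real) \<Rightarrow> (real \<Rightarrow> real) \<Rightarrow> ennreal" where
  "energy W u uxx v =
     (1/2) * (\<integral>\<^sup>+ x. ennreal ((v x)\<^sup>2 + (uxx x)\<^sup>2) \<partial>lborel)
     + (\<integral>\<^sup>+ x. ennreal (W (u x)) \<partial>lborel)"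

definition Xnorm :: "(real \<Rightarrow> real) \<Rightarrow> (real \<Rightarrow> real) \<Rightarrow> (real \<Rightarrow> real) \<Rightarrow> real" where
  "Xnorm u uxx v = sqrt (LINT x|lborel. (v x)\<^sup>2 + (uxx x)\<^sup>2 + (u x)\<^sup>2)"

end

theory Submission
  imports Defs "HOL-Computational_Algebra.Polynomial"
begin

text \<open>The representative \<open>U\<close> of an \<open>H\<^sup>2\<close> function \<open>u\<close> is \<open>C\<^sup>1\<close> with
  \<open>U'(y) - U'(x) = \<integral>\<^sub>x\<^sup>y u\<^sub>x\<^sub>x\<close>, so \<open>\<integral> u\<^sub>x\<^sub>x\<^sup>2 \<le> 1/4\<close> makes \<open>U'\<close> oscillate by at most
  1/2 on intervals of length 1. If \<open>\<bar>U\<bar>\<close> reached 1 somewhere, it would then stay above 1/2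
  on an interval of length 1/4, costing \<open>\<integral> W(U) \<ge> \<eta>/16\<close>. Hence once the energy \<open>E\<close> is
  small, \<open>\<bar>U\<bar> < 1\<close> everywhere, (W-i) gives \<open>U\<^sup>2 \<le> W(U)/\<eta>\<close>, and the squared norm is at
  most \<open>(2 + 1/\<eta>) E\<close>.

  The representation of \<open>u\<close> rests on the lemma of du Bois-Reymond: a locally integrable
  function whose integrals against all derivatives of test functions vanish is a.e.
  constant.\<close>

section \<open>Towers of derivatives\<close>

definition deriv_tower :: "(nat \<Rightarrow> real \<Rightarrow> real) \<Rightarrow> bool" where
  "deriv_tower D \<longleftrightarrow> (\<forall>k x. (D k has_real_derivative D (Suc k) x) (at x))"

lemma deriv_towerD: "deriv_tower D \<Longrightarrow> (D k has_real_derivative D (Suc k) x) (at x)"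
  by (simp add: deriv_tower_def)

lemma deriv_tower_continuous_on: "deriv_tower D \<Longrightarrow> continuous_on S (D k)"
  by (meson DERIV_isCont continuous_at_imp_continuous_on deriv_towerD)

lemma deriv_tower_borel_measurable: "deriv_tower D \<Longrightarrow> D k \<in> borel_measurable borel"
  by (intro borel_measurable_continuous_onI deriv_tower_continuous_on)

lemma deriv_tower_deriv: "deriv_tower D \<Longrightarrow> deriv (D k) x = D (Suc k) x"
  by (simp add: DERIV_imp_deriv deriv_towerD)

lemma deriv_tower_vanishing:
  assumes "deriv_tower D" "\<And>x. \<bar>x\<bar> > R \<Longrightarrow> D k x = 0" "\<bar>x\<bar> > R"
  shows "D (Suc k) x = 0"
proof -
  have "((\<lambda>x. 0) has_real_derivative D (Suc k) x) (at x)"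
  proof (rule has_field_derivative_transform_within_open[where S="{x. \<bar>x\<bar> > R}"])
    show "(D k has_real_derivative D (Suc k) x) (at x)" using deriv_towerD[OF assms(1)] .
    show "open {x::real. \<bar>x\<bar> > R}" by (intro open_Collect_less continuous_intros)
  qed (use assms in auto)
  then show ?thesis using DERIV_const DERIV_unique by blast
qed

lemma deriv_tower_diff:
  "deriv_tower D \<Longrightarrow> deriv_tower E \<Longrightarrow> deriv_tower (\<lambda>k x. D k x - E k x)"
  unfolding deriv_tower_def by (auto intro: DERIV_diff)

lemma deriv_tower_cmult: "deriv_tower D \<Longrightarrow> deriv_tower (\<lambda>k x. c * D k x)"
  unfolding deriv_tower_def by (auto intro: DERIV_cmult)

lemma deriv_tower_compose_affine:
  assumes "deriv_tower D"
  shows "deriv_tower (\<lambda>k x. a ^ k * D k (a * x + b))"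
  unfolding deriv_tower_def
proof (intro allI)
  fix k x
  have "((\<lambda>x. D k (a * x + b)) has_real_derivative D (Suc k) (a * x + b) * a) (at x)"
    by (rule DERIV_chain2[OF deriv_towerD[OF assms]]) (auto intro!: derivative_eq_intros)
  then show "((\<lambda>x. a ^ k * D k (a * x + b)) has_real_derivative
      a ^ Suc k * D (Suc k) (a * x + b)) (at x)"
    using DERIV_cmult[where c="a ^ k"] by (fastforce simp: algebra_simps)
qed

lemma deriv_tower_mult:
  assumes "deriv_tower D" "deriv_tower E"
  shows "deriv_tower (\<lambda>k x. \<Sum>i = 0..k. real (k choose i) * D i x * E (k - i) x)"
  unfolding deriv_tower_def
proof (intro allI)
  fix n x
  have choose_Suc: "Suc n choose k = (n choose k) + (if k = 0 then 0 else n choose (k - 1))" for k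
    by (cases k) simp_all
  have "((\<lambda>x. \<Sum>i = 0..n. real (n choose i) * D i x * E (n - i) x) has_real_derivative
      (\<Sum>i = 0..n. real (n choose i) * (D (Suc i) x * E (n - i) x + E (Suc (n - i)) x * D i x))) (at x)"
    using deriv_towerD[OF assms(1)] deriv_towerD[OF assms(2)]
    by (auto intro!: DERIV_sum DERIV_cmult DERIV_mult simp: mult.assoc)
  moreover have "(\<Sum>i = 0..n. real (n choose i) * (D (Suc i) x * E (n - i) x + E (Suc (n - i)) x * D i x))
      = E 0 x * D (Suc n) x + (\<Sum>i = 0..n. D i x * (real (Suc n choose i) * E (Suc n - i) x))"
    apply (simp add: choose_Suc algebra_simps sum.distrib)
    apply (subst (4) sum_Suc_reindex)
    apply (auto simp: algebra_simps Suc_diff_le intro: sum.cong)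
    done
  ultimately show "((\<lambda>x. \<Sum>i = 0..n. real (n choose i) * D i x * E (n - i) x) has_real_derivative
      (\<Sum>i = 0..Suc n. real (Suc n choose i) * D i x * E (Suc n - i) x)) (at x)"
    by (simp add: algebra_simps)
qed

lemma deriv_tower_primitive:
  assumes "deriv_tower D" "\<And>x. (F has_real_derivative D 0 x) (at x)"
  shows "deriv_tower (\<lambda>k. if k = 0 then F else D (k - 1))"
  unfolding deriv_tower_def
proof (intro allI)
  fix k x
  show "((if k = 0 then F else D (k - 1)) has_real_derivative
      (if Suc k = 0 then F else D (Suc k - 1)) x) (at x)"
    using assms by (cases k) (auto simp: deriv_tower_def)
qed

section \<open>Test functions\<close>

lemma test_funI:
  assumes "deriv_tower D" "\<And>x. \<bar>x\<bar> > R \<Longrightarrow> D 0 x = 0"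
  shows "test_fun (D 0)"
  using assms unfolding test_fun_def deriv_tower_def by blast

lemma test_funE:
  assumes "test_fun \<phi>"
  obtains D R where "deriv_tower D" "D 0 = \<phi>" "R > 0" "\<And>x. \<bar>x\<bar> \<ge> R \<Longrightarrow> \<phi> x = 0"
proof -
  obtain D R where D: "deriv_tower D" "D 0 = \<phi>" and R: "\<And>x. \<bar>x\<bar> > R \<Longrightarrow> \<phi> x = 0"
    using assms unfolding test_fun_def deriv_tower_def by blast
  show ?thesis
    by (rule that[OF D, of "\<bar>R\<bar> + 1"]) (use R in auto)
qed

lemma continuous_on_test_fun: "test_fun \<phi> \<Longrightarrow> continuous_on S \<phi>"
  by (metis test_funE deriv_tower_continuous_on)

lemma test_fun_deriv:
  assumes "test_fun \<phi>"
  shows "test_fun (deriv \<phi>)"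
proof -
  obtain D R where D: "deriv_tower D" "D 0 = \<phi>" and R: "\<And>x. \<bar>x\<bar> \<ge> R \<Longrightarrow> \<phi> x = 0"
    using test_funE[OF assms] by blast
  have "deriv_tower (\<lambda>k. D (Suc k))" using D(1) by (simp add: deriv_tower_def)
  moreover have "D (Suc 0) x = 0" if "\<bar>x\<bar> > R" for x
    by (rule deriv_tower_vanishing[OF D(1) _ that]) (use D R in auto)
  ultimately have "test_fun (D (Suc 0))" by (rule test_funI)
  moreover have "deriv \<phi> = D (Suc 0)"
    using deriv_tower_deriv[OF D(1), of 0] D(2) by auto
  ultimately show ?thesis by simp
qed

lemma poly_times_exp_minus_tendsto_0: "((\<lambda>z::real. poly q z * exp (- z)) \<longlongrightarrow> 0) at_top"
proof -
  have "((\<lambda>z::real. \<Sum>i\<le>degree q. coeff q i * (z ^ i / exp z)) \<longlongrightarrow> (\<Sum>i\<le>degree q. coeff q i * 0)) at_top"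
    by (intro tendsto_sum tendsto_mult tendsto_const tendsto_power_div_exp_0)
  moreover have "poly q z * exp (- z) = (\<Sum>i\<le>degree q. coeff q i * (z ^ i / exp (z::real)))" for z
    by (simp add: poly_altdef sum_distrib_right exp_minus divide_inverse mult.assoc)
  ultimately show ?thesis by simp
qed

text \<open>The derivatives of \<open>exp (-1/t)\<close> on \<open>t > 0\<close> are \<open>P\<^sub>k (1/t) * exp (-1/t)\<close>, with
  \<open>P\<^sub>k\<^sub>+\<^sub>1 = X\<^sup>2 * (P\<^sub>k - P\<^sub>k')\<close>.\<close>
fun flat_poly :: "nat \<Rightarrow> real poly" where
  "flat_poly 0 = 1"
| "flat_poly (Suc k) = [:0, 0, 1:] * (flat_poly k - pderiv (flat_poly k))"

definition flat :: "nat \<Rightarrow> real \<Rightarrow> real" where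
  "flat k t = (if t > 0 then poly (flat_poly k) (1 / t) * exp (- (1 / t)) else 0)"

lemma poly_inverse_times_exp_has_derivative:
  assumes "t > 0"
  shows "((\<lambda>t. poly p (1 / t) * exp (- (1 / t))) has_real_derivative
      poly ([:0, 0, 1:] * (p - pderiv p)) (1 / t) * exp (- (1 / t))) (at t)"
proof -
  have inv: "((\<lambda>t. 1 / t) has_real_derivative - (1 / t\<^sup>2)) (at t)"
    using assms by (auto intro!: derivative_eq_intros simp: power2_eq_square)
  have "((\<lambda>t. poly p (1 / t)) has_real_derivative poly (pderiv p) (1 / t) * - (1 / t\<^sup>2)) (at t)"
    by (rule DERIV_chain2[OF poly_DERIV inv])
  moreover have "((\<lambda>t. exp (- (1 / t))) has_real_derivative exp (- (1 / t)) * (1 / t\<^sup>2)) (at t)"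
    using DERIV_chain2[OF DERIV_exp DERIV_minus[OF inv]] by simp
  ultimately have "((\<lambda>t. poly p (1 / t) * exp (- (1 / t))) has_real_derivative
      poly (pderiv p) (1 / t) * - (1 / t\<^sup>2) * exp (- (1 / t)) + exp (- (1 / t)) * (1 / t\<^sup>2) * poly p (1 / t)) (at t)"
    by (rule DERIV_mult)
  then show ?thesis
    by (simp add: algebra_simps power2_eq_square)
qed

lemma deriv_tower_flat: "deriv_tower flat"
  unfolding deriv_tower_def
proof (intro allI)
  fix k and x :: real
  consider "x > 0" | "x < 0" | "x = 0" by linarith
  then show "(flat k has_real_derivative flat (Suc k) x) (at x)"
  proof cases
    case 1
    have "((\<lambda>t. poly (flat_poly k) (1 / t) * exp (- (1 / t))) has_real_derivative flat (Suc k) x) (at x)"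
      using poly_inverse_times_exp_has_derivative[OF 1, of "flat_poly k"] 1 by (simp add: flat_def)
    then show ?thesis
      by (rule has_field_derivative_transform_within_open[where S="{0<..}"]) (use 1 in \<open>auto simp: flat_def\<close>)
  next
    case 2
    have "((\<lambda>t. 0) has_real_derivative flat (Suc k) x) (at x)"
      using 2 by (simp add: flat_def)
    then show ?thesis
      by (rule has_field_derivative_transform_within_open[where S="{..<0}"]) (use 2 in \<open>auto simp: flat_def\<close>)
  next
    case 3
    have "((\<lambda>y. (flat k y - flat k 0) / (y - 0)) \<longlongrightarrow> 0) (at_left 0)"
    proof (rule tendsto_eventually)
      show "\<forall>\<^sub>F y in at_left 0. (flat k y - flat k 0) / (y - 0) = (0::real)"
        using eventually_at_left_real[of "-1" 0] by (rule eventually_mono) (auto simp: flat_def)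
    qed
    moreover have "((\<lambda>y. (flat k y - flat k 0) / (y - 0)) \<longlongrightarrow> 0) (at_right 0)"
    proof -
      have "filterlim (\<lambda>y::real. 1 / y) at_top (at_right 0)"
        using filterlim_inverse_at_top_right by (simp add: inverse_eq_divide)
      from filterlim_compose[OF poly_times_exp_minus_tendsto_0[of "[:0, 1:] * flat_poly k"] this]
      have "((\<lambda>y. poly ([:0, 1:] * flat_poly k) (1 / y) * exp (- (1 / y))) \<longlongrightarrow> 0) (at_right 0)"
        by simp
      then show ?thesis
      proof (rule Lim_transform_eventually)
        show "\<forall>\<^sub>F y in at_right 0. poly ([:0, 1:] * flat_poly k) (1 / y) * exp (- (1 / y))
            = (flat k y - flat k 0) / (y - 0)"
          using eventually_at_right_real[of 0 1] by (rule eventually_mono) (auto simp: flat_def)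
      qed
    qed
    ultimately have "((\<lambda>y. (flat k y - flat k 0) / (y - 0)) \<longlongrightarrow> 0) (at 0)"
      by (simp add: filterlim_at_split)
    then show ?thesis using 3
      by (simp add: has_field_derivative_iff flat_def)
  qed
qed

lemma integrable_lborel_vanishing_outside_Icc:
  fixes f :: "real \<Rightarrow> real"
  assumes "continuous_on {a..b} f" "\<And>x. x \<notin> {a..b} \<Longrightarrow> f x = 0"
  shows "integrable lborel f"
proof -
  have "set_integrable lborel {a..b} f" by (rule borel_integrable_atLeastAtMost'[OF assms(1)])
  moreover have "(\<lambda>x. indicator {a..b} x *\<^sub>R f x) = f"
    using assms(2) by (force simp: indicator_def fun_eq_iff)
  ultimately show ?thesis by (simp add: set_integrable_def)
qed

lemma lborel_integral_vanishing_outside_Icc: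
  fixes f :: "real \<Rightarrow> real"
  assumes "continuous_on {a..b} f" "\<And>x. x \<notin> {a..b} \<Longrightarrow> f x = 0"
  shows "(LINT x|lborel. f x) = integral {a..b} f"
proof -
  have "(f has_integral (LINT x|lborel. f x)) UNIV"
    by (rule has_integral_integral_lborel[OF integrable_lborel_vanishing_outside_Icc[OF assms]])
  moreover have "(f has_integral integral {a..b} f) UNIV"
    by (rule has_integral_on_superset[OF integrable_integral[OF integrable_continuous_real[OF assms(1)]]])
       (use assms(2) in auto)
  ultimately show ?thesis by (rule has_integral_unique)
qed

lemma continuous_vanishing_outside_bounded:
  fixes f :: "real \<Rightarrow> real"
  assumes "continuous_on UNIV f" "\<And>x. \<bar>x\<bar> > R \<Longrightarrow> f x = 0"
  obtains B where "\<And>x. \<bar>f x\<bar> \<le> B"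
proof -
  have "compact (f ` {-R..R})"
    by (rule compact_continuous_image[OF continuous_on_subset[OF assms(1)]]) auto
  then obtain B where B: "\<And>x. x \<in> {-R..R} \<Longrightarrow> \<bar>f x\<bar> \<le> B"
    using compact_imp_bounded[of "f ` {-R..R}"] unfolding bounded_iff by force
  show ?thesis
  proof (rule that[of "max B 0"])
    show "\<bar>f x\<bar> \<le> max B 0" for x
      using B[of x] assms(2)[of x] by (cases "x \<in> {-R..R}") auto
  qed
qed

lemma integral_Icc_has_real_derivative_vanishing_left:
  fixes f :: "real \<Rightarrow> real"
  assumes cont: "continuous_on UNIV f" and zero: "\<And>x. x < a \<Longrightarrow> f x = 0" and "b < a"
  shows "((\<lambda>x. integral {b..x} f) has_real_derivative f x) (at x)"
proof (cases "x < a")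
  case True
  have "((\<lambda>x. 0) has_real_derivative f x) (at x)" using True zero by simp
  then show ?thesis
  proof (rule has_field_derivative_transform_within_open[where S="{..<a}"])
    fix y :: real assume "y \<in> {..<a}"
    then have "\<forall>t\<in>{b..y}. f t = 0" using zero by auto
    then show "0 = integral {b..y} f" by (metis integral_unique has_integral_is_0)
  qed (use True in auto)
next
  case False
  have "((\<lambda>u. integral {b..u} f) has_vector_derivative f x) (at x within {b..x+1})"
    by (rule integral_has_vector_derivative) (use False \<open>b < a\<close> cont continuous_on_subset in auto)
  then have "((\<lambda>u. integral {b..u} f) has_vector_derivative f x) (at x)"
    using at_within_interior[of x "{b..x+1}"] False \<open>b < a\<close> by auto
  then show ?thesis by (simp add: has_real_derivative_iff_has_vector_derivative)
qed

definition bump :: "real \<Rightarrow> real" where "bump t = flat 0 t * flat 0 (1 - t)"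

text \<open>The derivatives of \<open>bump\<close>, by Leibniz's rule.\<close>
definition bump_deriv :: "nat \<Rightarrow> real \<Rightarrow> real" where
  "bump_deriv k x = (\<Sum>i = 0..k. real (k choose i) * flat i x * ((-1) ^ (k - i) * flat (k - i) ((-1) * x + 1)))"

lemma deriv_tower_bump: "deriv_tower bump_deriv"
  using deriv_tower_mult[OF deriv_tower_flat deriv_tower_compose_affine[OF deriv_tower_flat, of "-1" 1]]
  unfolding bump_deriv_def[abs_def] .

lemma bump_deriv_0: "bump_deriv 0 = bump"
  by (auto simp: bump_deriv_def bump_def fun_eq_iff)

lemma bump_eq_0: "t \<le> 0 \<or> t \<ge> 1 \<Longrightarrow> bump t = 0"
  by (auto simp: bump_def flat_def)

lemma bump_pos: "0 < t \<Longrightarrow> t < 1 \<Longrightarrow> bump t > 0"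
  by (auto simp: bump_def flat_def)

lemma bump_nonneg: "bump t \<ge> 0"
  by (auto simp: bump_def flat_def)

lemma continuous_on_bump: "continuous_on S bump"
  using deriv_tower_continuous_on[OF deriv_tower_bump, of S 0] by (simp add: bump_deriv_0)

lemma bump_integrable_on: "bump integrable_on {a..b}"
  by (simp add: integrable_continuous_real continuous_on_bump)

definition bump_mass :: real where "bump_mass = integral {0..1} bump"

lemma bump_mass_pos: "bump_mass > 0"
proof -
  have "bump_mass \<ge> 0" unfolding bump_mass_def
    by (rule integral_nonneg) (auto intro: bump_integrable_on bump_nonneg)
  moreover have "bump_mass \<noteq> 0"
  proof
    assume "bump_mass = 0"
    then have "\<forall>x \<in> {0..1}. bump x = 0"
      using integral_eq_0_iff[of 0 1 bump] continuous_on_bump bump_nonneg by (simp add: bump_mass_def)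
    then show False using bump_pos[of "1/2"] by auto
  qed
  ultimately show ?thesis by simp
qed

lemma integrable_bump: "integrable lborel bump"
  by (rule integrable_lborel_vanishing_outside_Icc[OF continuous_on_bump, of 0 1]) (auto intro: bump_eq_0)

lemma lborel_integral_bump: "(LINT x|lborel. bump x) = bump_mass"
  unfolding bump_mass_def
  by (rule lborel_integral_vanishing_outside_Icc[OF continuous_on_bump]) (auto intro: bump_eq_0)

definition step :: "real \<Rightarrow> real" where "step t = integral {-1..t} bump / bump_mass"

definition step_deriv :: "nat \<Rightarrow> real \<Rightarrow> real" where
  "step_deriv k = (if k = 0 then step else (\<lambda>x. bump_deriv (k - 1) x / bump_mass))"

lemma deriv_tower_step: "deriv_tower step_deriv"
proof -
  have "((\<lambda>x. integral {-1..x} bump) has_real_derivative bump x) (at x)" for x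
    by (rule integral_Icc_has_real_derivative_vanishing_left[of bump 0])
      (simp_all add: continuous_on_bump bump_eq_0)
  then have "(step has_real_derivative bump x / bump_mass) (at x)" for x
    unfolding step_def by (intro DERIV_cdivide)
  moreover have "deriv_tower (\<lambda>k x. bump_deriv k x / bump_mass)"
    using deriv_tower_cmult[OF deriv_tower_bump, of "1 / bump_mass"] by simp
  ultimately have "deriv_tower (\<lambda>k. if k = 0 then step else (\<lambda>x. bump_deriv (k - 1) x / bump_mass))"
    by (intro deriv_tower_primitive) (simp_all add: bump_deriv_0)
  then show ?thesis unfolding step_deriv_def by (simp add: fun_eq_iff)
qed

lemma step_deriv_0: "step_deriv 0 = step" by (simp add: step_deriv_def)

lemma step_eq_0: "t \<le> 0 \<Longrightarrow> step t = 0"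
proof -
  assume "t \<le> 0"
  then have "integral {-1..t} bump = 0"
    by (intro integral_unique[OF has_integral_is_0]) (simp add: bump_eq_0)
  then show "step t = 0" unfolding step_def by simp
qed

lemma step_eq_1: "t \<ge> 1 \<Longrightarrow> step t = 1"
proof -
  assume t: "t \<ge> 1"
  have "(bump has_integral bump_mass) {0..1}"
    unfolding bump_mass_def by (rule integrable_integral) (auto intro: bump_integrable_on)
  then have "(bump has_integral bump_mass) {-1..t}"
    by (rule has_integral_on_superset) (use t in \<open>auto simp: bump_eq_0\<close>)
  then show ?thesis using bump_mass_pos unfolding step_def by (simp add: integral_unique)
qed

lemma step_mono: "s \<le> t \<Longrightarrow> step s \<le> step t"
proof -
  assume st: "s \<le> t"
  have "integral {-1..s} bump \<le> integral {-1..t} bump"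
    by (rule integral_subset_le) (use st in \<open>auto simp: bump_integrable_on bump_nonneg\<close>)
  then show ?thesis unfolding step_def using bump_mass_pos by (simp add: divide_right_mono)
qed

lemma step_bounds: "0 \<le> step t" "step t \<le> 1"
  using step_mono[of 0 t] step_mono[of t 1] step_eq_0[of t] step_eq_0[of 0] step_eq_1[of t] step_eq_1[of 1]
  by (cases "t \<le> 0"; cases "t \<le> 1"; simp)+

definition smooth_indicator :: "real \<Rightarrow> real \<Rightarrow> real \<Rightarrow> real \<Rightarrow> real" where
  "smooth_indicator n a b x = step (n * x + (- n * a)) - step (n * x + (- n * b))"

lemma smooth_indicator_eq_0:
  assumes "n \<ge> 1" "a < b" "x \<le> a \<or> x \<ge> b + 1"
  shows "smooth_indicator n a b x = 0"
proof (cases "x \<le> a")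
  case True
  then have "n * x + (- n * a) \<le> 0" "n * x + (- n * b) \<le> 0"
    using assms mult_left_mono[of x a n] mult_left_mono[of x b n] by auto
  then show ?thesis by (simp add: smooth_indicator_def step_eq_0)
next
  case False
  then have "x - b \<ge> 1" "x - a \<ge> 1" using assms by auto
  then have "n * (x - b) \<ge> 1 * 1" "n * (x - a) \<ge> 1 * 1"
    using assms by (intro mult_mono; simp)+
  then show ?thesis by (simp add: smooth_indicator_def step_eq_1 algebra_simps)
qed

lemma test_fun_smooth_indicator:
  assumes "n \<ge> 1" "a < b"
  shows "test_fun (smooth_indicator n a b)"
proof -
  define D where "D k x = n ^ k * step_deriv k (n * x + (- n * a)) - n ^ k * step_deriv k (n * x + (- n * b))"
    for k x
  have "deriv_tower D"
    unfolding D_def[abs_def]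
    by (intro deriv_tower_diff deriv_tower_compose_affine deriv_tower_step)
  moreover have "D 0 = smooth_indicator n a b"
    by (simp add: D_def smooth_indicator_def step_deriv_0 fun_eq_iff)
  moreover have "smooth_indicator n a b x = 0" if "\<bar>x\<bar> > \<bar>a\<bar> + \<bar>b\<bar> + 1" for x
    using that assms by (intro smooth_indicator_eq_0) auto
  ultimately show ?thesis using test_funI[of D "\<bar>a\<bar> + \<bar>b\<bar> + 1"] by simp
qed

lemma abs_smooth_indicator_le_1: "\<bar>smooth_indicator n a b x\<bar> \<le> 1"
  using step_bounds[of "n * x + (- n * a)"] step_bounds[of "n * x + (- n * b)"]
  by (simp add: smooth_indicator_def abs_le_iff)

lemma eventually_real_Suc_mult_ge_1:
  assumes "d > 0"
  shows "\<forall>\<^sub>F m in sequentially. real (Suc m) * d \<ge> 1"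
proof -
  obtain N :: nat where N: "N > 1 / d" using reals_Archimedean2 by blast
  have "real (Suc m) * d \<ge> 1" if "m \<ge> N" for m
  proof -
    have "real (Suc m) > 1 / d" using N that by linarith
    then show ?thesis using assms by (simp add: field_simps)
  qed
  then show ?thesis unfolding eventually_sequentially by blast
qed

lemma smooth_indicator_LIMSEQ:
  assumes "a < b"
  shows "(\<lambda>m. smooth_indicator (Suc m) a b x) \<longlonglongrightarrow> indicator {a<..b} x"
proof (cases "x \<le> a")
  case True
  then show ?thesis using smooth_indicator_eq_0[of _ a b x] assms by (simp add: indicator_def)
next
  case False
  have "\<forall>\<^sub>F m in sequentially. smooth_indicator (Suc m) a b x = indicator {a<..b} x"
  proof (cases "x \<le> b")
    case True
    have "x - a > 0" using False by simp
    from eventually_real_Suc_mult_ge_1[OF this] show ?thesis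
    proof eventually_elim
      case (elim m)
      moreover have "real (Suc m) * (x - b) \<le> 0" using True by (simp add: mult_nonneg_nonpos)
      ultimately show ?case
        using False True by (simp add: smooth_indicator_def step_eq_0 step_eq_1 algebra_simps)
    qed
  next
    case x_gt_b: False
    have "x - b > 0" using x_gt_b by simp
    from eventually_real_Suc_mult_ge_1[OF this] show ?thesis
    proof eventually_elim
      case (elim m)
      moreover have "real (Suc m) * (x - b) \<le> real (Suc m) * (x - a)"
        using assms by (intro mult_left_mono) auto
      ultimately show ?case
        using x_gt_b by (simp add: smooth_indicator_def step_eq_1 algebra_simps)
    qed
  qed
  then show ?thesis by (rule tendsto_eventually)
qed

section \<open>The fundamental lemmas of the calculus of variations\<close>

lemma AE_zero_if_interval_integrals_zero:
  fixes h :: "real \<Rightarrow> real"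
  assumes li: "\<And>a b. set_integrable lborel {a..b} h"
    and zero: "\<And>a b. a < b \<Longrightarrow> (LINT x:{a..b}|lborel. h x) = 0"
  shows "AE x in lborel. h x = 0"
proof -
  have "\<And>a b. h integrable_on cbox a b"
    using set_borel_integral_eq_integral(1)[OF li] by simp
  then obtain N where N: "negligible N"
    and P: "\<And>x e. \<lbrakk>x \<notin> N; 0 < e\<rbrakk> \<Longrightarrow>
               \<exists>d>0. \<forall>k. 0 < k \<and> k < d \<longrightarrow>
                         norm (integral (cbox x (x + k *\<^sub>R One)) h /\<^sub>R k ^ DIM(real) - h x) < e"
    by (rule integrable_ccontinuous_explicit) blast
  have "h x = 0" if xN: "x \<notin> N" for x
  proof (rule ccontr)
    assume "h x \<noteq> 0"
    then obtain d where d: "d > 0" and dd: "\<forall>k. 0 < k \<and> k < d \<longrightarrow>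
         norm (integral (cbox x (x + k *\<^sub>R One)) h /\<^sub>R k ^ DIM(real) - h x) < \<bar>h x\<bar>"
      using P[OF xN, of "\<bar>h x\<bar>"] by auto
    have "norm (integral (cbox x (x + (d/2) *\<^sub>R One)) h /\<^sub>R (d/2) ^ DIM(real) - h x) < \<bar>h x\<bar>"
      by (rule dd[rule_format]) (use d in simp)
    moreover have "integral (cbox x (x + (d/2) *\<^sub>R One)) h = (LINT y:{x..x+d/2}|lborel. h y)"
      using set_borel_integral_eq_integral(2)[OF li] by simp
    ultimately show False using zero d by simp
  qed
  moreover have "AE x in lebesgue. x \<notin> N"
    using N by (simp add: AE_not_in negligible_iff_null_sets)
  ultimately have "AE x in lebesgue. h x = 0" by (auto elim: AE_mp)
  then show ?thesis by (simp add: AE_completion_iff)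
qed

lemma AE_zero_if_test_integrals_zero:
  fixes h :: "real \<Rightarrow> real"
  assumes hm: "h \<in> borel_measurable lborel"
    and li: "\<And>a b. set_integrable lborel {a..b} h"
    and zero: "\<And>\<phi>. test_fun \<phi> \<Longrightarrow> (LINT x|lborel. h x * \<phi> x) = 0"
  shows "AE x in lborel. h x = 0"
proof (rule AE_zero_if_interval_integrals_zero[OF li])
  fix a b :: real assume ab: "a < b"
  define s where "s m x = h x * smooth_indicator (real (Suc m)) a b x" for m x
  define f where "f x = h x * indicator {a<..b} x" for x
  define w where "w x = \<bar>h x\<bar> * indicator {a..b+1} x" for x
  have "(\<lambda>m. integral\<^sup>L lborel (s m)) \<longlonglongrightarrow> integral\<^sup>L lborel f"
  proof (rule integral_dominated_convergence[where w=w])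
    show "f \<in> borel_measurable lborel" unfolding f_def using hm by measurable
    have "smooth_indicator n a b \<in> borel_measurable borel" for n
      unfolding smooth_indicator_def step_deriv_0[symmetric]
      using deriv_tower_borel_measurable[OF deriv_tower_step] by measurable
    then show "s m \<in> borel_measurable lborel" for m unfolding s_def using hm by measurable
    have "integrable lborel (\<lambda>x. \<bar>indicator {a..b+1} x *\<^sub>R h x\<bar>)"
      using li[of a "b+1"] unfolding set_integrable_def by (rule integrable_abs)
    moreover have "(\<lambda>x. \<bar>indicator {a..b+1} x *\<^sub>R h x\<bar>) = w"
      unfolding w_def by (auto simp: indicator_def fun_eq_iff)
    ultimately show "integrable lborel w" by simp
    show "AE x in lborel. (\<lambda>m. s m x) \<longlonglongrightarrow> f x"
      unfolding s_def f_def by (intro AE_I2 tendsto_mult tendsto_const smooth_indicator_LIMSEQ ab)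
    show "AE x in lborel. norm (s m x) \<le> w x" for m
    proof (intro AE_I2)
      fix x
      show "norm (s m x) \<le> w x"
      proof (cases "x \<in> {a..b+1}")
        case True
        then show ?thesis unfolding s_def w_def
          using abs_smooth_indicator_le_1[of "real (Suc m)" a b x] by (simp add: abs_mult mult_left_le)
      next
        case False
        then have "smooth_indicator (real (Suc m)) a b x = 0" using ab by (intro smooth_indicator_eq_0) auto
        then show ?thesis unfolding s_def w_def by simp
      qed
    qed
  qed
  moreover have "integral\<^sup>L lborel (s m) = 0" for m
    unfolding s_def by (rule zero[OF test_fun_smooth_indicator]) (use ab in auto)
  ultimately have "integral\<^sup>L lborel f = 0"
    by (simp add: LIMSEQ_const_iff)
  then have "(LINT x:{a<..b}|lborel. h x) = 0"
    unfolding f_def set_lebesgue_integral_def by (simp add: mult.commute)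
  then show "(LINT x:{a..b}|lborel. h x) = 0"
    using interval_integral_Icc[of a b h] interval_integral_Ioc[of a b h] ab by simp
qed

lemma integrable_mult_vanishing_outside:
  fixes h \<phi> :: "real \<Rightarrow> real"
  assumes hm: "h \<in> borel_measurable lborel" and li: "\<And>a b. set_integrable lborel {a..b} h"
    and cont: "continuous_on UNIV \<phi>" and zero: "\<And>x. \<bar>x\<bar> > R \<Longrightarrow> \<phi> x = 0"
  shows "integrable lborel (\<lambda>x. h x * \<phi> x)"
proof -
  obtain B where B: "\<And>x. \<bar>\<phi> x\<bar> \<le> B"
    using continuous_vanishing_outside_bounded[OF cont zero] by blast
  have int: "integrable lborel (\<lambda>x. B * \<bar>indicator {-R..R} x *\<^sub>R h x\<bar>)"
    using li[of "-R" R] unfolding set_integrable_def by (intro integrable_mult_right integrable_abs)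
  show ?thesis
  proof (rule Bochner_Integration.integrable_bound[OF int])
    show "(\<lambda>x. h x * \<phi> x) \<in> borel_measurable lborel"
      using hm borel_measurable_continuous_onI[OF cont] by measurable
    show "AE x in lborel. norm (h x * \<phi> x) \<le> norm (B * \<bar>indicator {-R..R} x *\<^sub>R h x\<bar>)"
    proof (intro AE_I2)
      fix x
      have "\<bar>h x * \<phi> x\<bar> \<le> \<bar>h x\<bar> * B" using B[of x] by (simp add: abs_mult mult_left_mono)
      moreover have "B * \<bar>h x\<bar> \<le> \<bar>B\<bar> * \<bar>h x\<bar>" by (simp add: mult_right_mono)
      ultimately show "norm (h x * \<phi> x) \<le> norm (B * \<bar>indicator {-R..R} x *\<^sub>R h x\<bar>)"
        using zero[of x] by (cases "x \<in> {-R..R}") (auto simp: abs_mult mult.commute)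
    qed
  qed
qed

lemma integrable_mult_test_fun:
  fixes h :: "real \<Rightarrow> real"
  assumes "h \<in> borel_measurable lborel" "\<And>a b. set_integrable lborel {a..b} h" "test_fun \<phi>"
  shows "integrable lborel (\<lambda>x. h x * \<phi> x)"
proof -
  obtain R where "\<And>x. \<bar>x\<bar> \<ge> R \<Longrightarrow> \<phi> x = 0" using test_funE[OF assms(3)] by blast
  then show ?thesis
    by (intro integrable_mult_vanishing_outside[OF assms(1,2) continuous_on_test_fun[OF assms(3)], of R])
      auto
qed

lemma integrable_test_fun:
  assumes "test_fun \<phi>"
  shows "integrable lborel \<phi>"
proof -
  obtain R where "\<And>x. \<bar>x\<bar> \<ge> R \<Longrightarrow> \<phi> x = 0" using test_funE[OF assms] by blast
  then show ?thesis
    by (intro integrable_lborel_vanishing_outside_Icc[OF continuous_on_test_fun[OF assms], of "-R" R])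
      auto
qed

lemma set_integral_deriv_tower:
  assumes D: "deriv_tower D" and "a \<le> b"
  shows "(LINT x:{a..b}|lborel. D (Suc k) x) = D k b - D k a"
proof -
  have "(LBINT x=a..b. D (Suc k) x) = D k b - D k a"
  proof (rule interval_integral_FTC_finite)
    show "continuous_on {min a b..max a b} (D (Suc k))" by (rule deriv_tower_continuous_on[OF D])
    fix x
    have "(D k has_vector_derivative D (Suc k) x) (at x)"
      using deriv_towerD[OF D] by (simp add: has_real_derivative_iff_has_vector_derivative)
    then show "(D k has_vector_derivative D (Suc k) x) (at x within {min a b..max a b})"
      by (rule has_vector_derivative_at_within)
  qed
  then show ?thesis using interval_integral_Icc[OF \<open>a \<le> b\<close>, of "D (Suc k)"] by simp
qed

text \<open>Subtracting the right multiple of the bump makes the total integral vanish, and a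
  test function of total integral zero has a test function as primitive.\<close>
lemma test_fun_primitive_minus_bump:
  assumes "test_fun \<phi>"
  obtains F where "test_fun F"
    "\<And>x. deriv F x = \<phi> x - (LINT y|lborel. \<phi> y) * (bump x / bump_mass)"
proof -
  obtain D R where D: "deriv_tower D" "D 0 = \<phi>" and R: "R > 0" "\<And>x. \<bar>x\<bar> \<ge> R \<Longrightarrow> \<phi> x = 0"
    using test_funE[OF assms] by blast
  define m where "m = (LINT y|lborel. \<phi> y)"
  define Df where "Df k x = D k x - (m / bump_mass) * bump_deriv k x" for k x
  have Df: "deriv_tower Df"
    unfolding Df_def[abs_def] by (intro deriv_tower_diff D(1) deriv_tower_cmult deriv_tower_bump)
  have Df0: "Df 0 x = \<phi> x - m * (bump x / bump_mass)" for x
    by (simp add: Df_def D(2) bump_deriv_0)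
  have Df0_zero: "Df 0 x = 0" if "x < -R \<or> x > R + 1" for x
    using that R by (auto simp: Df0 bump_eq_0 intro!: R(2))
  have Df0_cont: "continuous_on UNIV (Df 0)" by (rule deriv_tower_continuous_on[OF Df])
  define F where "F x = integral {-R-1..x} (Df 0)" for x
  have F_deriv: "(F has_real_derivative Df 0 x) (at x)" for x
    unfolding F_def
    by (rule integral_Icc_has_real_derivative_vanishing_left[OF Df0_cont, of "-R"])
      (use Df0_zero R in auto)
  have "(LINT x|lborel. Df 0 x) = 0"
    using integrable_test_fun[OF assms] integrable_bump bump_mass_pos by (simp add: Df0 m_def lborel_integral_bump)
  then have Df0_integral: "integral {-R-1..R+1} (Df 0) = 0"
    using lborel_integral_vanishing_outside_Icc[OF continuous_on_subset[OF Df0_cont], of "-R-1" "R+1"]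
      Df0_zero by force
  have F_zero: "F x = 0" if "\<bar>x\<bar> > R + 1" for x
  proof (cases "x < 0")
    case True
    then have "{-R-1..x} = {}" using that by auto
    then show ?thesis by (simp add: F_def)
  next
    case False
    then have x: "x > R + 1" using that by auto
    have "(Df 0 has_integral integral {-R-1..R+1} (Df 0)) {-R-1..R+1}"
      by (rule integrable_integral[OF integrable_continuous_real[OF continuous_on_subset[OF Df0_cont]]]) auto
    then have "(Df 0 has_integral 0) {-R-1..x}"
      unfolding Df0_integral by (rule has_integral_on_superset) (use x Df0_zero in auto)
    then show ?thesis by (simp add: F_def integral_unique)
  qed
  define DF where "DF = (\<lambda>k. if k = 0 then F else Df (k - 1))"
  have DF: "deriv_tower DF" unfolding DF_def by (rule deriv_tower_primitive[OF Df F_deriv])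
  show ?thesis
  proof (rule that)
    show "test_fun F" using test_funI[OF DF, of "R+1"] F_zero by (simp add: DF_def)
    show "deriv F x = \<phi> x - (LINT y|lborel. \<phi> y) * (bump x / bump_mass)" for x
      using deriv_tower_deriv[OF DF, of 0 x] by (simp add: DF_def Df0 m_def)
  qed
qed

lemma AE_const_if_test_deriv_integrals_zero:
  fixes h :: "real \<Rightarrow> real"
  assumes hm: "h \<in> borel_measurable lborel"
    and li: "\<And>a b. set_integrable lborel {a..b} h"
    and zero: "\<And>\<phi>. test_fun \<phi> \<Longrightarrow> (LINT x|lborel. h x * deriv \<phi> x) = 0"
  shows "\<exists>c. AE x in lborel. h x = c"
proof -
  define c where "c = (LINT x|lborel. h x * (bump x / bump_mass))"
  have "AE x in lborel. h x - c = 0"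
  proof (rule AE_zero_if_test_integrals_zero)
    show "(\<lambda>x. h x - c) \<in> borel_measurable lborel" using hm by measurable
    show "set_integrable lborel {a..b} (\<lambda>x. h x - c)" for a b
      using li[of a b] borel_integrable_atLeastAtMost'[of a b "\<lambda>x. c"] by (simp add: set_integral_diff(1))
    fix \<phi> :: "real \<Rightarrow> real" assume \<phi>: "test_fun \<phi>"
    have h\<phi>: "integrable lborel (\<lambda>x. h x * \<phi> x)"
      by (rule integrable_mult_test_fun[OF hm li \<phi>])
    have hbump: "integrable lborel (\<lambda>x. h x * (bump x / bump_mass))"
      by (rule integrable_mult_vanishing_outside[OF hm li, where R=1])
        (use bump_mass_pos in \<open>auto intro!: continuous_intros continuous_on_bump bump_eq_0\<close>)
    obtain F where "test_fun F" and dF: "\<And>x. deriv F x = \<phi> x - (LINT y|lborel. \<phi> y) * (bump x / bump_mass)"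
      using test_fun_primitive_minus_bump[OF \<phi>] by blast
    then have "0 = (LINT x|lborel. h x * \<phi> x - (LINT y|lborel. \<phi> y) * (h x * (bump x / bump_mass)))"
      using zero[of F] by (simp add: right_diff_distrib mult.left_commute)
    also have "\<dots> = (LINT x|lborel. h x * \<phi> x) - (LINT y|lborel. \<phi> y) * c"
      unfolding c_def
      by (simp only: Bochner_Integration.integral_diff[OF h\<phi> integrable_mult_right[OF hbump]]
          integral_mult_right_zero)
    also have "\<dots> = (LINT x|lborel. (h x - c) * \<phi> x)"
      using h\<phi> integrable_test_fun[OF \<phi>] by (simp add: left_diff_distrib)
    finally show "(LINT x|lborel. (h x - c) * \<phi> x) = 0" by simp
  qed
  then show ?thesis by auto
qed

section \<open>Primitives and weak derivatives\<close>

definition primitive :: "(real \<Rightarrow> real) \<Rightarrow> real \<Rightarrow> real" where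
  "primitive g x = (LBINT t=0..x. g t)"

lemma interval_lebesgue_integrable_if_locally_integrable:
  fixes g :: "real \<Rightarrow> real"
  assumes li: "\<And>a b. set_integrable lborel {a..b} g"
  shows "interval_lebesgue_integrable lborel (ereal a) (ereal b) g"
proof (cases "a \<le> b")
  case True
  have "set_integrable lborel (einterval (ereal a) (ereal b)) g"
    by (rule set_integrable_subset[OF li[of a b]]) (auto simp: einterval_iff)
  then show ?thesis using True by (simp add: interval_lebesgue_integrable_def)
next
  case False
  have "set_integrable lborel (einterval (ereal b) (ereal a)) g"
    by (rule set_integrable_subset[OF li[of b a]]) (auto simp: einterval_iff)
  then show ?thesis using False by (simp add: interval_lebesgue_integrable_def)
qed

lemma primitive_diff:
  fixes g :: "real \<Rightarrow> real"
  assumes li: "\<And>a b. set_integrable lborel {a..b} g" and "x \<le> y"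
  shows "primitive g y - primitive g x = (LINT t:{x..y}|lborel. g t)"
proof -
  have "interval_lebesgue_integrable lborel (ereal (min 0 (min x y))) (ereal (max 0 (max x y))) g"
    by (rule interval_lebesgue_integrable_if_locally_integrable[OF li])
  then have "(LBINT t=0..x. g t) + (LBINT t=x..y. g t) = (LBINT t=0..y. g t)"
    by (intro interval_integral_sum) (simp add: zero_ereal_def)
  moreover have "(LBINT t=x..y. g t) = (LINT t:{x..y}|lborel. g t)"
    using interval_integral_Icc[OF \<open>x \<le> y\<close>, of g] by simp
  ultimately show ?thesis by (simp add: primitive_def)
qed

lemma continuous_on_primitive:
  fixes g :: "real \<Rightarrow> real"
  assumes li: "\<And>a b. set_integrable lborel {a..b} g"
  shows "continuous_on UNIV (primitive g)"
proof (rule continuous_at_imp_continuous_on, intro ballI)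
  fix x :: real
  define N where "N = \<bar>x\<bar> + 1"
  have "continuous_on {-N..N} (\<lambda>z. primitive g (-N) + integral {-N..z} g)"
    by (intro continuous_intros indefinite_integral_continuous_1)
      (use set_borel_integral_eq_integral(1)[OF li] in simp)
  moreover have "primitive g (-N) + integral {-N..z} g = primitive g z" if "z \<in> {-N..N}" for z
    using primitive_diff[OF li, of "-N" z] that set_borel_integral_eq_integral(2)[OF li] by simp
  ultimately have "continuous_on {-N..N} (primitive g)"
    by (rule continuous_on_eq)
  moreover have "x \<in> interior {-N..N}" by (auto simp: N_def)
  ultimately show "isCont (primitive g) x"
    by (rule continuous_on_interior)
qed

lemma primitive_has_real_derivative:
  fixes g :: "real \<Rightarrow> real"
  assumes "continuous_on UNIV g"
  shows "(primitive g has_real_derivative g x) (at x)"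
proof -
  define N where "N = \<bar>x\<bar> + 1"
  have N: "-N \<le> 0" "0 \<le> N" "-N \<le> x" "x \<le> N" "x \<in> interior {-N..N}" by (auto simp: N_def)
  have "((\<lambda>u. LBINT t=ereal 0..u. g t) has_vector_derivative g x) (at x within {-N..N})"
    by (rule interval_integral_FTC2) (use N continuous_on_subset[OF assms] in auto)
  then have "((\<lambda>u. LBINT t=0..u. g t) has_vector_derivative g x) (at x)"
    using at_within_interior[OF N(5)] by (simp add: zero_ereal_def)
  then show ?thesis
    by (simp add: has_real_derivative_iff_has_vector_derivative primitive_def[abs_def])
qed

lemma integrable_pair_lborel_mult:
  fixes f q :: "real \<Rightarrow> real"
  assumes f: "integrable lborel f" and q: "integrable lborel q"
  shows "integrable (lborel \<Otimes>\<^sub>M lborel) (\<lambda>(x, y). f x * q y)"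
proof (rule integrableI_bounded)
  have fm: "f \<in> borel_measurable borel" and qm: "q \<in> borel_measurable borel"
    using f q by (auto dest: borel_measurable_integrable)
  show "(\<lambda>(x, y). f x * q y) \<in> borel_measurable (lborel \<Otimes>\<^sub>M lborel)"
    using fm qm by measurable
  have "(\<integral>\<^sup>+ p. ennreal (norm ((\<lambda>(x, y). f x * q y) p)) \<partial>(lborel \<Otimes>\<^sub>M lborel))
      = (\<integral>\<^sup>+ x. (\<integral>\<^sup>+ y. ennreal (norm ((\<lambda>(x, y). f x * q y) (x, y))) \<partial>lborel) \<partial>lborel)"
    by (rule lborel.nn_integral_fst[symmetric]) (use fm qm in measurable)
  also have "\<dots> = (\<integral>\<^sup>+ x. ennreal \<bar>f x\<bar> * (\<integral>\<^sup>+ y. ennreal \<bar>q y\<bar> \<partial>lborel) \<partial>lborel)"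
    using qm by (simp add: abs_mult ennreal_mult nn_integral_cmult)
  also have "\<dots> = (\<integral>\<^sup>+ x. ennreal \<bar>f x\<bar> \<partial>lborel) * (\<integral>\<^sup>+ y. ennreal \<bar>q y\<bar> \<partial>lborel)"
    using fm by (simp add: nn_integral_multc)
  also have "\<dots> < \<infinity>"
    using f q by (auto simp: integrable_iff_bounded ennreal_mult_less_top)
  finally show "(\<integral>\<^sup>+ p. ennreal (norm ((\<lambda>(x, y). f x * q y) p)) \<partial>(lborel \<Otimes>\<^sub>M lborel)) < \<infinity>" .
qed

lemma integrable_triangle_kernel:
  fixes f g :: "real \<Rightarrow> real"
  assumes fm: "f \<in> borel_measurable borel" and B: "\<And>x. \<bar>f x\<bar> \<le> B"
    and f_zero: "\<And>x. \<bar>x\<bar> > R \<Longrightarrow> f x = 0"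
    and gm: "g \<in> borel_measurable borel" and g: "set_integrable lborel {-R..R} g"
  shows "integrable (lborel \<Otimes>\<^sub>M lborel) (\<lambda>(x, y). f x * (if -R \<le> y \<and> y \<le> x then g y else 0))"
proof (rule Bochner_Integration.integrable_bound)
  show "integrable (lborel \<Otimes>\<^sub>M lborel)
      (\<lambda>(x, y). B * indicator {-R..R} x * (indicator {-R..R} y *\<^sub>R g y))"
    using g unfolding set_integrable_def
    by (intro integrable_pair_lborel_mult integrable_mult_right integrable_real_indicator)
      (auto simp: emeasure_lborel_Icc_eq)
  show "(\<lambda>(x, y). f x * (if -R \<le> y \<and> y \<le> x then g y else 0)) \<in> borel_measurable (lborel \<Otimes>\<^sub>M lborel)"
    using fm gm by measurable
  have "B \<ge> 0" using B[of 0] by linarith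
  then show "AE p in lborel \<Otimes>\<^sub>M lborel. norm ((\<lambda>(x, y). f x * (if -R \<le> y \<and> y \<le> x then g y else 0)) p)
      \<le> norm ((\<lambda>(x, y). B * indicator {-R..R} x * (indicator {-R..R} y *\<^sub>R g y)) p)"
    using B f_zero
    by (intro AE_I2) (auto simp: indicator_def abs_mult mult_right_mono not_le split: prod.split)
qed

lemma weak_deriv_primitive:
  fixes g :: "real \<Rightarrow> real"
  assumes gm: "g \<in> borel_measurable lborel" and li: "\<And>a b. set_integrable lborel {a..b} g"
  shows "weak_deriv (primitive g) g"
  unfolding weak_deriv_def
proof (intro allI impI)
  fix \<phi> assume "test_fun \<phi>"
  then obtain D R where D: "deriv_tower D" "D 0 = \<phi>" and R: "R > 0" "\<And>x. \<bar>x\<bar> \<ge> R \<Longrightarrow> \<phi> x = 0"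
    using test_funE by blast
  define f where "f = D 1"
  have f_zero: "f x = 0" if "\<bar>x\<bar> > R" for x
    unfolding f_def using deriv_tower_vanishing[of D R 0 x] D R that by simp
  have f_cont: "continuous_on UNIV f" unfolding f_def by (rule deriv_tower_continuous_on[OF D(1)])
  obtain B where B: "\<And>x. \<bar>f x\<bar> \<le> B"
    using continuous_vanishing_outside_bounded[OF f_cont f_zero] by blast
  have deriv_\<phi>: "deriv \<phi> x = f x" for x using deriv_tower_deriv[OF D(1), of 0 x] D(2) by (simp add: f_def)
  have f_int: "integrable lborel f"
    by (rule integrable_lborel_vanishing_outside_Icc[OF continuous_on_subset[OF f_cont], of "-R" R])
      (auto intro: f_zero)
  have "(LINT x|lborel. f x) = (LINT x:{-R..R}|lborel. f x)"
    unfolding set_lebesgue_integral_def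
    by (intro Bochner_Integration.integral_cong) (auto simp: indicator_def intro!: f_zero)
  also have "\<dots> = 0" using set_integral_deriv_tower[OF D(1), of "-R" R 0] R D(2) by (simp add: f_def)
  finally have f_integral: "(LINT x|lborel. f x) = 0" .
  define k where "k x y = f x * (if -R \<le> y \<and> y \<le> x then g y else 0)" for x y
  have k_int: "integrable (lborel \<Otimes>\<^sub>M lborel) (\<lambda>(x, y). k x y)"
    unfolding k_def using B f_zero li[of "-R" R] f_cont gm
    by (intro integrable_triangle_kernel) (auto intro: borel_measurable_continuous_onI)
  define I where "I x = f x * (LINT y:{-R..x}|lborel. g y)" for x
  have k_fst: "(LINT y|lborel. k x y) = I x" for x
  proof -
    have "(LINT y|lborel. k x y) = (LINT y|lborel. f x * (indicator {-R..x} y *\<^sub>R g y))"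
      by (intro Bochner_Integration.integral_cong) (auto simp: k_def indicator_def)
    then show ?thesis unfolding I_def set_lebesgue_integral_def by simp
  qed
  have k_snd: "(LINT x|lborel. k x y) = - (g y * \<phi> y)" for y
  proof (cases "-R \<le> y \<and> y \<le> R")
    case True
    have "(LINT x|lborel. k x y) = (LINT x|lborel. (indicator {y..R} x *\<^sub>R D (Suc 0) x) * g y)"
      by (intro Bochner_Integration.integral_cong)
        (use True f_zero in \<open>auto simp: k_def indicator_def f_def not_le\<close>)
    also have "\<dots> = (D 0 R - D 0 y) * g y"
      using set_integral_deriv_tower[OF D(1), of y R 0] True
      by (simp add: set_lebesgue_integral_def)
    finally show ?thesis using R D(2) by simp
  next
    case False
    then have "k x y = 0" for x using f_zero[of x] by (auto simp: k_def)
    moreover have "\<phi> y = 0" using False by (intro R(2)) auto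
    ultimately show ?thesis by simp
  qed
  have I_int: "integrable lborel I"
    using lborel_pair.integrable_fst'[OF k_int] by (simp add: k_fst)
  have "primitive g x * f x = I x + primitive g (-R) * f x" for x
  proof (cases "-R \<le> x")
    case True
    then show ?thesis using primitive_diff[OF li True] by (simp add: I_def algebra_simps)
  next
    case False
    then show ?thesis using f_zero[of x] by (simp add: I_def)
  qed
  then have "(LINT x|lborel. primitive g x * deriv \<phi> x) = (LINT x|lborel. I x) + primitive g (-R) * 0"
    using I_int f_int by (simp add: deriv_\<phi> f_integral[symmetric])
  also have "\<dots> = - (LINT y|lborel. g y * \<phi> y)"
    using lborel_pair.Fubini_integral[OF k_int] by (simp add: k_fst k_snd)
  finally show "(LINT x|lborel. primitive g x * deriv \<phi> x) = - (LINT x|lborel. g x * \<phi> x)" .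
qed

lemma weak_deriv_AE_eq_primitive:
  fixes u g :: "real \<Rightarrow> real"
  assumes um: "u \<in> borel_measurable lborel" and liu: "\<And>a b. set_integrable lborel {a..b} u"
    and gm: "g \<in> borel_measurable lborel" and lig: "\<And>a b. set_integrable lborel {a..b} g"
    and "weak_deriv u g"
  shows "\<exists>c. AE x in lborel. u x = c + primitive g x"
proof -
  have G_cont: "continuous_on UNIV (primitive g)" by (rule continuous_on_primitive[OF lig])
  have Gm: "primitive g \<in> borel_measurable lborel"
    using borel_measurable_continuous_onI[OF G_cont] by simp
  have liG: "set_integrable lborel {a..b} (primitive g)" for a b
    by (rule borel_integrable_atLeastAtMost') (rule continuous_on_subset[OF G_cont], auto)
  have "\<exists>c. AE x in lborel. u x - primitive g x = c"
  proof (rule AE_const_if_test_deriv_integrals_zero)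
    show "(\<lambda>x. u x - primitive g x) \<in> borel_measurable lborel" using um Gm by measurable
    show "set_integrable lborel {a..b} (\<lambda>x. u x - primitive g x)" for a b
      using liu[of a b] liG[of a b] by (rule set_integral_diff(1))
    fix \<phi> :: "real \<Rightarrow> real" assume \<phi>: "test_fun \<phi>"
    have "integrable lborel (\<lambda>x. u x * deriv \<phi> x)" "integrable lborel (\<lambda>x. primitive g x * deriv \<phi> x)"
      using um liu Gm liG test_fun_deriv[OF \<phi>] by (auto intro: integrable_mult_test_fun)
    moreover have "(LINT x|lborel. u x * deriv \<phi> x) = - (LINT x|lborel. g x * \<phi> x)"
      "(LINT x|lborel. primitive g x * deriv \<phi> x) = - (LINT x|lborel. g x * \<phi> x)"
      using \<open>weak_deriv u g\<close> weak_deriv_primitive[OF gm lig] \<phi> unfolding weak_deriv_def by blast+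
    ultimately show "(LINT x|lborel. (u x - primitive g x) * deriv \<phi> x) = 0"
      by (simp add: left_diff_distrib)
  qed
  then obtain c where "AE x in lborel. u x - primitive g x = c" by blast
  then have "AE x in lborel. u x = c + primitive g x" by eventually_elim simp
  then show ?thesis by blast
qed

lemma abs_le_quarter_plus_square: "\<bar>y :: real\<bar> \<le> 1/4 + y\<^sup>2"
proof -
  have "0 \<le> (\<bar>y\<bar> - 1/2)\<^sup>2" by simp
  also have "\<dots> = y\<^sup>2 - \<bar>y\<bar> + 1/4"
    by (simp add: power2_eq_square algebra_simps abs_mult_self_eq)
  finally show ?thesis by simp
qed

lemma L2_borel_measurable: "L2 f \<Longrightarrow> f \<in> borel_measurable lborel"
  unfolding L2_def by auto

lemma L2_set_integrable:
  assumes "L2 f"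
  shows "set_integrable lborel {a..b} f"
  unfolding set_integrable_def
proof (rule Bochner_Integration.integrable_bound[where f="\<lambda>x. indicator {a..b} x + (f x)\<^sup>2 :: real"])
  have "integrable lborel (\<lambda>x. (f x)\<^sup>2)" using assms unfolding L2_def by simp
  then show "integrable lborel (\<lambda>x. indicator {a..b} x + (f x)\<^sup>2 :: real)"
    by (intro Bochner_Integration.integrable_add integrable_real_indicator) (auto simp: emeasure_lborel_Icc_eq)
  show "(\<lambda>x. indicator {a..b} x *\<^sub>R f x) \<in> borel_measurable lborel"
    using L2_borel_measurable[OF assms] by measurable
  show "AE x in lborel. norm (indicator {a..b} x *\<^sub>R f x) \<le> norm (indicator {a..b} x + (f x)\<^sup>2 :: real)"
  proof (intro AE_I2)
    fix x
    have "\<bar>f x\<bar> \<le> 1 + (f x)\<^sup>2" using abs_le_quarter_plus_square[of "f x"] by simp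
    then show "norm (indicator {a..b} x *\<^sub>R f x) \<le> norm (indicator {a..b} x + (f x)\<^sup>2 :: real)"
      by (auto simp: indicator_def)
  qed
qed

lemma H2_with_C1_representative:
  assumes "H2_with u uxx"
  obtains U U' where "\<And>x. (U has_real_derivative U' x) (at x)" "AE x in lborel. u x = U x"
    "\<And>x y. x \<le> y \<Longrightarrow> U' y - U' x = (LINT t:{x..y}|lborel. uxx t)"
proof -
  obtain ux where u: "L2 u" and uxx: "L2 uxx" and ux: "L2 ux"
    and "weak_deriv u ux" "weak_deriv ux uxx"
    using assms unfolding H2_with_def by blast
  note L2 = L2_borel_measurable L2_set_integrable
  obtain c1 where c1: "AE x in lborel. ux x = c1 + primitive uxx x"
    using weak_deriv_AE_eq_primitive[OF L2[OF ux] L2[OF uxx] \<open>weak_deriv ux uxx\<close>] by blast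
  define U' where "U' x = c1 + primitive uxx x" for x
  have U'_cont: "continuous_on UNIV U'"
    unfolding U'_def by (intro continuous_intros continuous_on_primitive[OF L2_set_integrable[OF uxx]])
  have U'm: "U' \<in> borel_measurable lborel" using borel_measurable_continuous_onI[OF U'_cont] by simp
  have U'_li: "set_integrable lborel {a..b} U'" for a b
    by (rule borel_integrable_atLeastAtMost') (rule continuous_on_subset[OF U'_cont], auto)
  have "weak_deriv u U'"
    unfolding weak_deriv_def
  proof (intro allI impI)
    fix \<phi> :: "real \<Rightarrow> real" assume \<phi>: "test_fun \<phi>"
    have \<phi>m: "\<phi> \<in> borel_measurable borel"
      using continuous_on_test_fun[OF \<phi>] by (rule borel_measurable_continuous_onI)
    have "(LINT x|lborel. U' x * \<phi> x) = (LINT x|lborel. ux x * \<phi> x)"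
    proof (rule integral_cong_AE)
      show "(\<lambda>x. U' x * \<phi> x) \<in> borel_measurable lborel" using U'm \<phi>m by measurable
      show "(\<lambda>x. ux x * \<phi> x) \<in> borel_measurable lborel"
        using L2_borel_measurable[OF ux] \<phi>m by measurable
      show "AE x in lborel. U' x * \<phi> x = ux x * \<phi> x" using c1 by eventually_elim (simp add: U'_def)
    qed
    moreover have "(LINT x|lborel. u x * deriv \<phi> x) = - (LINT x|lborel. ux x * \<phi> x)"
      using \<open>weak_deriv u ux\<close> \<phi> unfolding weak_deriv_def by blast
    ultimately show "(LINT x|lborel. u x * deriv \<phi> x) = - (LINT x|lborel. U' x * \<phi> x)" by simp
  qed
  then obtain c0 where "AE x in lborel. u x = c0 + primitive U' x"
    using weak_deriv_AE_eq_primitive[OF L2[OF u] U'm U'_li] by blast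
  moreover have "((\<lambda>x. c0 + primitive U' x) has_real_derivative U' x) (at x)" for x
    using primitive_has_real_derivative[OF U'_cont, of x] by (intro derivative_eq_intros) auto
  moreover have "U' y - U' x = (LINT t:{x..y}|lborel. uxx t)" if "x \<le> y" for x y
    using primitive_diff[OF L2_set_integrable[OF uxx] that] by (simp add: U'_def)
  ultimately show ?thesis using that by blast
qed

section \<open>Functions of small energy\<close>

text \<open>Crude but sufficient: \<open>\<bar>t\<bar> \<le> 1/4 + t\<^sup>2\<close> replaces Cauchy-Schwarz.\<close>
lemma abs_set_integral_le_half_if_square_integral_le_quarter:
  fixes f :: "real \<Rightarrow> real"
  assumes f: "L2 f" and small: "(LINT t|lborel. (f t)\<^sup>2) \<le> 1/4" and "x \<le> y" "y \<le> x + 1"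
  shows "\<bar>LINT t:{x..y}|lborel. f t\<bar> \<le> 1/2"
proof -
  have f2: "integrable lborel (\<lambda>t. (f t)\<^sup>2)" using f unfolding L2_def by simp
  have ind: "integrable lborel (\<lambda>t. indicator {x..y} t * (1/4) :: real)"
    by (intro integrable_mult_left integrable_real_indicator) (auto simp: emeasure_lborel_Icc_eq)
  have "\<bar>LINT t:{x..y}|lborel. f t\<bar> \<le> (LINT t|lborel. indicator {x..y} t * (1/4) + (f t)\<^sup>2)"
    unfolding set_lebesgue_integral_def
  proof (rule integral_abs_bound_integral)
    show "integrable lborel (\<lambda>t. indicator {x..y} t *\<^sub>R f t)"
      using L2_set_integrable[OF f, of x y] by (simp add: set_integrable_def)
    show "integrable lborel (\<lambda>t. indicator {x..y} t * (1/4) + (f t)\<^sup>2 :: real)"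
      using ind f2 by (rule Bochner_Integration.integrable_add)
    show "\<bar>indicator {x..y} t *\<^sub>R f t\<bar> \<le> indicator {x..y} t * (1/4) + (f t)\<^sup>2" for t
      using abs_le_quarter_plus_square[of "f t"] by (auto simp: indicator_def)
  qed
  also have "\<dots> = (y - x) / 4 + (LINT t|lborel. (f t)\<^sup>2)"
    using ind f2 \<open>x \<le> y\<close> by simp
  moreover have "(y - x) / 4 \<le> 1/4" using \<open>y \<le> x + 1\<close> by simp
  ultimately show ?thesis using small by linarith
qed

text \<open>Move away from \<open>x\<^sub>0\<close> in the direction in which \<open>U\<close> does not decrease much.\<close>
lemma ge_half_on_interval_if_ge_1:
  fixes U U' :: "real \<Rightarrow> real"
  assumes U: "\<And>x. (U has_real_derivative U' x) (at x)"
    and osc: "\<And>x y. x \<le> y \<Longrightarrow> y \<le> x + 1 \<Longrightarrow> \<bar>U' y - U' x\<bar> \<le> 1/2"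
    and "U x\<^sub>0 \<ge> 1"
  obtains p where "\<And>x. x \<in> {p..p + 1/4} \<Longrightarrow> U x \<ge> 1/2"
proof (cases "U' x\<^sub>0 \<ge> -1")
  case True
  have "U x \<ge> 1/2" if x: "x \<in> {x\<^sub>0..x\<^sub>0 + 1/4}" for x
  proof (cases "x = x\<^sub>0")
    case False
    then have "x\<^sub>0 < x" using x by auto
    then obtain z where z: "x\<^sub>0 < z" "z < x" "U x - U x\<^sub>0 = (x - x\<^sub>0) * U' z"
      using MVT2[OF _ U] by blast
    have "\<bar>U' z - U' x\<^sub>0\<bar> \<le> 1/2" by (rule osc) (use z x in auto)
    then have "U' z \<ge> -3/2" using True by linarith
    then have "(x - x\<^sub>0) * U' z \<ge> (x - x\<^sub>0) * (-3/2)"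
      using z by (intro mult_left_mono) auto
    moreover have "(x - x\<^sub>0) * (-3/2) \<ge> -3/8" using x by auto
    ultimately show ?thesis using z \<open>U x\<^sub>0 \<ge> 1\<close> by linarith
  qed (use \<open>U x\<^sub>0 \<ge> 1\<close> in simp)
  then show ?thesis by (rule that)
next
  case False
  have "U x \<ge> 1/2" if x: "x \<in> {x\<^sub>0 - 1/4..x\<^sub>0 - 1/4 + 1/4}" for x
  proof (cases "x = x\<^sub>0")
    case False
    then have "x < x\<^sub>0" using x by auto
    then obtain z where z: "x < z" "z < x\<^sub>0" "U x\<^sub>0 - U x = (x\<^sub>0 - x) * U' z"
      using MVT2[OF _ U] by blast
    have "\<bar>U' x\<^sub>0 - U' z\<bar> \<le> 1/2" by (rule osc) (use z x in auto)
    then have "U' z \<le> 0" using \<open>\<not> U' x\<^sub>0 \<ge> -1\<close> by linarith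
    then have "(x\<^sub>0 - x) * U' z \<le> 0"
      using z by (intro mult_nonneg_nonpos) auto
    then show ?thesis using z \<open>U x\<^sub>0 \<ge> 1\<close> by linarith
  qed (use \<open>U x\<^sub>0 \<ge> 1\<close> in simp)
  then show ?thesis by (rule that)
qed

lemma abs_ge_half_on_interval_if_abs_ge_1:
  fixes U U' :: "real \<Rightarrow> real"
  assumes U: "\<And>x. (U has_real_derivative U' x) (at x)"
    and osc: "\<And>x y. x \<le> y \<Longrightarrow> y \<le> x + 1 \<Longrightarrow> \<bar>U' y - U' x\<bar> \<le> 1/2"
    and "\<bar>U x\<^sub>0\<bar> \<ge> 1"
  obtains p where "\<And>x. x \<in> {p..p + 1/4} \<Longrightarrow> \<bar>U x\<bar> \<ge> 1/2"
proof (cases "U x\<^sub>0 \<ge> 1")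
  case True
  then obtain p where "\<And>x. x \<in> {p..p + 1/4} \<Longrightarrow> U x \<ge> 1/2"
    using ge_half_on_interval_if_ge_1[OF U osc] by blast
  then have "\<And>x. x \<in> {p..p + 1/4} \<Longrightarrow> \<bar>U x\<bar> \<ge> 1/2" by (meson abs_ge_self order_trans)
  then show ?thesis by (rule that)
next
  case False
  then have "- U x\<^sub>0 \<ge> 1" using \<open>\<bar>U x\<^sub>0\<bar> \<ge> 1\<close> by linarith
  moreover have "((\<lambda>x. - U x) has_real_derivative - U' x) (at x)" for x
    using DERIV_minus[OF U] .
  moreover have "\<bar>- U' y - - U' x\<bar> \<le> 1/2" if "x \<le> y" "y \<le> x + 1" for x y
    using osc[OF that] by linarith
  ultimately obtain p where "\<And>x. x \<in> {p..p + 1/4} \<Longrightarrow> - U x \<ge> 1/2"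
    using ge_half_on_interval_if_ge_1[of "\<lambda>x. - U x" "\<lambda>x. - U' x" x\<^sub>0] by blast
  then have "\<And>x. x \<in> {p..p + 1/4} \<Longrightarrow> \<bar>U x\<bar> \<ge> 1/2" by fastforce
  then show ?thesis by (rule that)
qed

context
  fixes W :: "real \<Rightarrow> real" and \<eta> :: real
  assumes W_cont: "continuous_on UNIV W"
    and W_small: "\<And>s. \<bar>s\<bar> \<le> 1 \<Longrightarrow> W s \<ge> \<eta> * s\<^sup>2"
    and W_large: "\<And>s. \<bar>s\<bar> \<ge> 1 \<Longrightarrow> W s \<ge> \<eta>"
    and \<eta>: "\<eta> > 0"
begin

lemma potential_nonneg: "W s \<ge> 0"
  using W_small[of s] W_large[of s] \<eta> by (cases "\<bar>s\<bar> \<le> 1") (auto intro: order_trans[rotated])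

lemma potential_ge_quarter: "\<bar>s\<bar> \<ge> 1/2 \<Longrightarrow> W s \<ge> \<eta> / 4"
proof (cases "\<bar>s\<bar> \<le> 1")
  case True
  assume "\<bar>s\<bar> \<ge> 1/2"
  then have "s\<^sup>2 \<ge> (1/2)\<^sup>2" by (metis abs_le_square_iff abs_of_nonneg zero_le_divide_1_iff zero_le_numeral)
  then have "\<eta> * s\<^sup>2 \<ge> \<eta> * (1/4)" using \<eta> by (simp add: power2_eq_square)
  then show ?thesis using W_small[OF True] by simp
qed (use W_large[of s] \<eta> in auto)

lemma abs_lt_1_if_small_potential:
  fixes U U' :: "real \<Rightarrow> real"
  assumes U: "\<And>x. (U has_real_derivative U' x) (at x)"
    and osc: "\<And>x y. x \<le> y \<Longrightarrow> y \<le> x + 1 \<Longrightarrow> \<bar>U' y - U' x\<bar> \<le> 1/2"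
    and small: "(\<integral>\<^sup>+x. ennreal (W (U x)) \<partial>lborel) < ennreal (\<eta> / 16)"
  shows "\<bar>U x\<bar> < 1"
proof (rule ccontr)
  assume "\<not> \<bar>U x\<bar> < 1"
  then obtain p where p: "\<And>y. y \<in> {p..p + 1/4} \<Longrightarrow> \<bar>U y\<bar> \<ge> 1/2"
    using abs_ge_half_on_interval_if_abs_ge_1[OF U osc, of x] by force
  have "ennreal (\<eta> / 16) = ennreal (\<eta> / 4) * emeasure lborel {p..p + 1/4}"
    using \<eta> by (simp add: ennreal_mult[symmetric])
  also have "\<dots> = (\<integral>\<^sup>+y. ennreal (\<eta> / 4) * indicator {p..p + 1/4} y \<partial>lborel)"
    by (rule nn_integral_cmult_indicator[symmetric]) simp
  also have "\<dots> \<le> (\<integral>\<^sup>+y. ennreal (W (U y)) \<partial>lborel)"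
    using p potential_ge_quarter by (intro nn_integral_mono) (auto simp: indicator_def intro: ennreal_leI)
  finally show False using small by simp
qed

lemma nn_integral_square_le_potential:
  assumes H2: "H2_with u uxx" and small_uxx: "(LINT t|lborel. (uxx t)\<^sup>2) \<le> 1/4"
    and small_W: "(\<integral>\<^sup>+x. ennreal (W (u x)) \<partial>lborel) < ennreal (\<eta> / 16)"
  shows "(\<integral>\<^sup>+x. ennreal ((u x)\<^sup>2) \<partial>lborel) \<le> ennreal (1 / \<eta>) * (\<integral>\<^sup>+x. ennreal (W (u x)) \<partial>lborel)"
proof -
  obtain U U' where U: "\<And>x. (U has_real_derivative U' x) (at x)" and ae: "AE x in lborel. u x = U x"
    and U'_diff: "\<And>x y. x \<le> y \<Longrightarrow> U' y - U' x = (LINT t:{x..y}|lborel. uxx t)"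
    using H2_with_C1_representative[OF H2] by blast
  have "L2 uxx" using H2 unfolding H2_with_def by blast
  have osc: "\<bar>U' y - U' x\<bar> \<le> 1/2" if "x \<le> y" "y \<le> x + 1" for x y
    using abs_set_integral_le_half_if_square_integral_le_quarter[OF \<open>L2 uxx\<close> small_uxx that] U'_diff[OF that(1)]
    by simp
  have W_U: "(\<integral>\<^sup>+x. ennreal (W (u x)) \<partial>lborel) = (\<integral>\<^sup>+x. ennreal (W (U x)) \<partial>lborel)"
    by (rule nn_integral_cong_AE) (use ae in eventually_elim, simp)
  have U_lt_1: "\<bar>U x\<bar> < 1" for x
    using abs_lt_1_if_small_potential[OF U osc] small_W W_U by simp
  have Um: "U \<in> borel_measurable borel"
    by (rule borel_measurable_continuous_onI, rule continuous_at_imp_continuous_on)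
      (use U DERIV_isCont in blast)
  have "(\<integral>\<^sup>+x. ennreal ((u x)\<^sup>2) \<partial>lborel) = (\<integral>\<^sup>+x. ennreal ((U x)\<^sup>2) \<partial>lborel)"
    by (rule nn_integral_cong_AE) (use ae in eventually_elim, simp)
  also have "\<dots> \<le> (\<integral>\<^sup>+x. ennreal (1 / \<eta>) * ennreal (W (U x)) \<partial>lborel)"
  proof (rule nn_integral_mono)
    fix x
    have "(U x)\<^sup>2 \<le> 1 / \<eta> * W (U x)"
      using W_small[of "U x"] U_lt_1[of x] \<eta> by (simp add: field_simps)
    then show "ennreal ((U x)\<^sup>2) \<le> ennreal (1 / \<eta>) * ennreal (W (U x))"
      using \<eta> potential_nonneg[of "U x"] by (simp add: ennreal_leI ennreal_mult[symmetric])
  qed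
  also have "\<dots> = ennreal (1 / \<eta>) * (\<integral>\<^sup>+x. ennreal (W (U x)) \<partial>lborel)"
  proof (rule nn_integral_cmult)
    show "(\<lambda>x. ennreal (W (U x))) \<in> borel_measurable lborel"
      using borel_measurable_continuous_onI[OF W_cont] Um by measurable
  qed
  finally show ?thesis using W_U by simp
qed

lemma nn_integral_Xnorm_le_energy:
  assumes H2: "H2_with u uxx" and "L2 v"
    and small: "energy W u uxx v < ennreal (min (\<eta> / 16) (1/8))"
  shows "(\<integral>\<^sup>+x. ennreal ((v x)\<^sup>2 + (uxx x)\<^sup>2 + (u x)\<^sup>2) \<partial>lborel)
      \<le> (2 + ennreal (1 / \<eta>)) * energy W u uxx v"
proof -
  define E where "E = energy W u uxx v"
  define K where "K = (\<integral>\<^sup>+x. ennreal ((v x)\<^sup>2 + (uxx x)\<^sup>2) \<partial>lborel)"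
  define P where "P = (\<integral>\<^sup>+x. ennreal (W (u x)) \<partial>lborel)"
  have E: "E = K / 2 + P" by (simp add: E_def K_def P_def energy_def ennreal_divide_times)
  have u: "L2 u" and uxx: "L2 uxx" using H2 unfolding H2_with_def by auto
  note m = L2_borel_measurable[OF u] L2_borel_measurable[OF uxx] L2_borel_measurable[OF \<open>L2 v\<close>]
  have "K = 2 * (K / 2)"
    by (simp add: ennreal_times_divide mult.commute[of 2] ennreal_mult_divide_eq)
  also have "\<dots> \<le> 2 * E" unfolding E by (intro mult_left_mono) simp_all
  finally have K_le: "K \<le> 2 * E" .
  have P_le: "P \<le> E" unfolding E by (rule add_increasing) simp_all
  have "ennreal (LINT x|lborel. (uxx x)\<^sup>2) = (\<integral>\<^sup>+x. ennreal ((uxx x)\<^sup>2) \<partial>lborel)"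
    using uxx unfolding L2_def by (intro nn_integral_eq_integral[symmetric]) auto
  also have "\<dots> \<le> K" unfolding K_def by (intro nn_integral_mono ennreal_leI) auto
  also have "\<dots> \<le> 2 * E" by (rule K_le)
  also have "\<dots> \<le> 2 * ennreal (1/8)"
    using small unfolding E_def by (intro mult_left_mono) (auto intro: order.trans[OF less_imp_le])
  also have "2 * ennreal (1/8) = ennreal (1/4)" using ennreal_mult[of 2 "1/8"] by simp
  finally have small_uxx: "(LINT x|lborel. (uxx x)\<^sup>2) \<le> 1/4"
    by (simp add: ennreal_le_iff)
  have "E < ennreal (\<eta> / 16)"
    using small unfolding E_def by (rule less_le_trans) (simp add: ennreal_leI)
  then have "P < ennreal (\<eta> / 16)" using P_le by (rule le_less_trans[rotated])
  then have "(\<integral>\<^sup>+x. ennreal ((u x)\<^sup>2) \<partial>lborel) \<le> ennreal (1 / \<eta>) * P"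
    unfolding P_def by (rule nn_integral_square_le_potential[OF H2 small_uxx])
  also have "\<dots> \<le> ennreal (1 / \<eta>) * E" using P_le by (rule mult_left_mono) simp
  finally have "(\<integral>\<^sup>+x. ennreal ((u x)\<^sup>2) \<partial>lborel) \<le> ennreal (1 / \<eta>) * E" .
  moreover have "(\<integral>\<^sup>+x. ennreal ((v x)\<^sup>2 + (uxx x)\<^sup>2 + (u x)\<^sup>2) \<partial>lborel)
      = K + (\<integral>\<^sup>+x. ennreal ((u x)\<^sup>2) \<partial>lborel)"
    unfolding K_def using m by (subst nn_integral_add[symmetric]) (auto intro!: nn_integral_cong ennreal_plus)
  ultimately show ?thesis using K_le
    by (simp add: E_def distrib_right add_mono)
qed

end

lemma Xnorm_eq_sqrt_nn_integral:
  assumes "L2 u" "L2 uxx" "L2 v"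
  shows "Xnorm u uxx v = sqrt (enn2real (\<integral>\<^sup>+x. ennreal ((v x)\<^sup>2 + (uxx x)\<^sup>2 + (u x)\<^sup>2) \<partial>lborel))"
proof -
  note m = L2_borel_measurable[OF assms(1)] L2_borel_measurable[OF assms(2)] L2_borel_measurable[OF assms(3)]
  have "(LINT x|lborel. (v x)\<^sup>2 + (uxx x)\<^sup>2 + (u x)\<^sup>2)
      = enn2real (\<integral>\<^sup>+x. ennreal ((v x)\<^sup>2 + (uxx x)\<^sup>2 + (u x)\<^sup>2) \<partial>lborel)"
    using m by (intro integral_eq_nn_integral) auto
  then show ?thesis by (simp add: Xnorm_def)
qed

text \<open>Only the continuity of \<open>W\<close> and (W-i) are used, and no subsequence is needed.\<close>
theorem lemma2:
  fixes W W' :: "real \<Rightarrow> real"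
    and \<eta> M \<alpha> :: real
    and u uxx v :: "nat \<Rightarrow> real \<Rightarrow> real"
  assumes W_deriv: "\<And>s. (W has_real_derivative W' s) (at s)"
    and W'_cont: "continuous_on UNIV W'"
    and Wi_pos: "\<eta> > 0"
    and Wi_small: "\<And>s. \<bar>s\<bar> \<le> 1 \<Longrightarrow> W s \<ge> \<eta> * s\<^sup>2"
    and Wi_large: "\<And>s. \<bar>s\<bar> \<ge> 1 \<Longrightarrow> W s \<ge> \<eta>"
    and Wii: "(W' has_real_derivative 1) (at 0)"
    and Wiii_M: "M > 0" and Wiii_alpha: "0 \<le> \<alpha>" "\<alpha> < 2"
    and Wiii: "\<And>s. s \<ge> 0 \<Longrightarrow> W s \<le> M * (if \<alpha> = 0 then 1 else s powr \<alpha>)"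
    and inX: "\<And>n. H2_with (u n) (uxx n) \<and> L2 (v n)"
    and E_lim: "(\<lambda>n. energy W (u n) (uxx n) (v n)) \<longlonglongrightarrow> 0"
  shows "\<exists>r. strict_mono r \<and> (\<lambda>n. Xnorm (u (r n)) (uxx (r n)) (v (r n))) \<longlonglongrightarrow> 0"
proof -
  have W_cont: "continuous_on UNIV W"
    by (rule continuous_at_imp_continuous_on) (use W_deriv DERIV_isCont in blast)
  define X where "X n = (\<integral>\<^sup>+x. ennreal ((v n x)\<^sup>2 + (uxx n x)\<^sup>2 + (u n x)\<^sup>2) \<partial>lborel)" for n
  have "\<forall>\<^sub>F n in sequentially. energy W (u n) (uxx n) (v n) < ennreal (min (\<eta> / 16) (1/8))"
    using Wi_pos by (intro order_tendstoD(2)[OF E_lim]) simp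
  then have "\<forall>\<^sub>F n in sequentially. X n \<le> (2 + ennreal (1 / \<eta>)) * energy W (u n) (uxx n) (v n)"
  proof (rule eventually_mono)
    fix n assume "energy W (u n) (uxx n) (v n) < ennreal (min (\<eta> / 16) (1/8))"
    then show "X n \<le> (2 + ennreal (1 / \<eta>)) * energy W (u n) (uxx n) (v n)"
      unfolding X_def using inX[of n]
      by (intro nn_integral_Xnorm_le_energy[OF W_cont Wi_small Wi_large Wi_pos]) auto
  qed
  moreover have "(\<lambda>n. (2 + ennreal (1 / \<eta>)) * energy W (u n) (uxx n) (v n)) \<longlonglongrightarrow> 0"
    using ennreal_tendsto_cmult[OF _ E_lim] by simp
  ultimately have "X \<longlonglongrightarrow> 0"
    by (intro tendsto_sandwich[of "\<lambda>n. 0" X]) auto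
  then have "(\<lambda>n. sqrt (enn2real (X n))) \<longlonglongrightarrow> sqrt (enn2real 0)"
    by (intro tendsto_real_sqrt tendsto_enn2real) simp_all
  moreover have "Xnorm (u n) (uxx n) (v n) = sqrt (enn2real (X n))" for n
    unfolding X_def using inX[of n] by (intro Xnorm_eq_sqrt_nn_integral) (auto simp: H2_with_def)
  ultimately show ?thesis by (intro exI[of _ id]) (simp add: strict_mono_id)
qed
end
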